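(* Let $N\ge0$ be an integer, let $\vec\beta$ be admissible, and let $\ell<0$. Then the numbers $p_0(\ell),\dots,p_N(\ell)$ defined in the context satisfy $0\le p_k(\ell)\le1$ for every $k$ and $\sum_{k=0}^Np_k(\ell)=1$. Consequently they define a probability distribution on $\{0,\dots,N\}$.
   Context: Let $N\ge0$ be an integer. A vector $\vec\beta=(\beta_0,\dots,\beta_N)$ is admissible if $\beta_0\ge\beta_1\ge\cdots\ge\beta_N>0$ and $\sum_i\beta_i=1$. For such a vector put $\mu_i=\beta_{i+1}/\sum_{j=0}^i\beta_j$ for $0\le i\le N-1$. For $\ell<0$ define: - if $N=0$, $p_0(\ell)=1$; - if $N\ge1$, $p_N(\ell)=\exp\!\big(-\frac{(1-\beta_N)\ell^2}{2\beta_N}\big)$; - for $1\le k\le N-1$, $$p_k(\ell)=\Big(\prod_{m=k}^{N-1}\frac1{\mu_m}\Big)\sum_{j=k-1}^{N-1}e^{-\ell^2/(2\mu_j)}\prod_{\substack{m=k-1\\ m\ne j}}^{N-1}\frac1{1/\mu_m-1/\mu_j};$$ - $p_0(\ell)=1-\sum_{k=1}^Np_k(\ell)$. *)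

theory Defs
  imports Complex_Main
begin

text \<open>A vector beta = (beta_0,...,beta_N) is represented by a function nat => real;
only the values at indices 0..N matter.\<close>

definition admissible :: "nat \<Rightarrow> (nat \<Rightarrow> real) \<Rightarrow> bool" where
  "admissible N \<beta> \<longleftrightarrow> (\<forall>i<N. \<beta> (Suc i) \<le> \<beta> i) \<and> \<beta> N > 0 \<and> (\<Sum>i=0..N. \<beta> i) = 1"

definition mu :: "(nat \<Rightarrow> real) \<Rightarrow> nat \<Rightarrow> real" where
  "mu \<beta> i = \<beta> (Suc i) / (\<Sum>j=0..i. \<beta> j)"

definition p_mid :: "nat \<Rightarrow> (nat \<Rightarrow> real) \<Rightarrow> nat \<Rightarrow> real \<Rightarrow> real" where
  "p_mid N \<beta> k l =
     (\<Prod>m=k..N-1. 1 / mu \<beta> m) *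
     (\<Sum>j=k-1..N-1. exp (- l\<^sup>2 / (2 * mu \<beta> j)) *
        (\<Prod>m\<in>{k-1..N-1} - {j}. 1 / (1 / mu \<beta> m - 1 / mu \<beta> j)))"

definition p_top :: "nat \<Rightarrow> (nat \<Rightarrow> real) \<Rightarrow> real \<Rightarrow> real" where
  "p_top N \<beta> l = exp (- ((1 - \<beta> N) * l\<^sup>2) / (2 * \<beta> N))"

definition p :: "nat \<Rightarrow> (nat \<Rightarrow> real) \<Rightarrow> nat \<Rightarrow> real \<Rightarrow> real" where
  "p N \<beta> k l =
     (if N = 0 then (if k = 0 then 1 else 0)
      else if k = N then p_top N \<beta> l
      else if 1 \<le> k \<and> k < N then p_mid N \<beta> k l
      else if k = 0 then 1 - (\<Sum>i=1..N-1. p_mid N \<beta> i l) - p_top N \<beta> l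
      else 0)"

end

theory Submission
  imports Defs
begin

text \<open>
  Put a m = 1 / mu m; as beta is non-increasing, these rates are positive and strictly
  increasing. With independent X m ~ Exp(a m) and T k = X k + ... + X (N-1), the quantity
  p k l is P(T k \<le> l^2/2 < T (k-1)) (reading T (-1) = \<infinity>, T N = 0), so the p k telescope to 1.
  Instead of probability theory the proof checks the two analytic facts behind this. The
  divided-difference sum F A x = \<Sum>j\<in>A. exp (- x * a j) * \<Prod>m\<in>A-{j}. 1 / (a m - a j),
  i.e. the density of \<Sum>m\<in>A. X m divided by \<Prod>m\<in>A. a m, is non-negative for x \<ge> 0:
  for B = insert b A, the function exp (a b * x) * F B x has derivative exp (a b * x) * F A x
  and vanishes at 0 by partial fractions. The survival function of \<Sum>m\<in>A. X m equals 1 at 0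
  and has derivative -(\<Prod>m\<in>A. a m) * F A x \<le> 0, so it stays in [0, 1].
\<close>

definition pf_weight :: "('i \<Rightarrow> real) \<Rightarrow> 'i set \<Rightarrow> 'i \<Rightarrow> real" where
  "pf_weight a A j = (\<Prod>m\<in>A - {j}. 1 / (a m - a j))"

definition hypoexp_kernel :: "('i \<Rightarrow> real) \<Rightarrow> 'i set \<Rightarrow> real \<Rightarrow> real" where
  "hypoexp_kernel a A x = (\<Sum>j\<in>A. exp (- x * a j) * pf_weight a A j)"

definition hypoexp_survival :: "('i \<Rightarrow> real) \<Rightarrow> 'i set \<Rightarrow> real \<Rightarrow> real" where
  "hypoexp_survival a A x = (\<Sum>j\<in>A. exp (- x * a j) * (\<Prod>m\<in>A - {j}. a m) * pf_weight a A j)"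

lemma pf_weight_insert:
  assumes "finite A" "b \<notin> A" "j \<in> A"
  shows "pf_weight a (insert b A) j = pf_weight a A j / (a b - a j)"
proof -
  have "insert b A - {j} = insert b (A - {j})" using assms by auto
  then show ?thesis
    using assms by (simp add: pf_weight_def)
qed

lemma pf_weight_insert_self:
  assumes "b \<notin> A"
  shows "pf_weight a (insert b A) b = (\<Prod>m\<in>A. 1 / (a m - a b))"
  using assms by (simp add: pf_weight_def)

lemma partial_fraction_expansion:
  assumes "finite A" "A \<noteq> {}" "inj_on a A" "c \<notin> a ` A"
  shows "(\<Sum>j\<in>A. pf_weight a A j / (a j - c)) = 1 / (\<Prod>m\<in>A. a m - c)"
  using assms
proof (induction A arbitrary: c rule: finite_ne_induct)
  case (singleton j)
  then show ?case by (simp add: pf_weight_def)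
next
  case (insert b A)
  have ab: "a b \<notin> a ` A" and cb: "c \<noteq> a b" and inj: "inj_on a A"
    using insert.hyps insert.prems by auto
  have "(\<Sum>j\<in>insert b A. pf_weight a (insert b A) j / (a j - c))
      = (\<Sum>j\<in>A. pf_weight a A j / (a j - c) - pf_weight a A j / (a j - a b)) / (a b - c)
        + (\<Prod>m\<in>A. 1 / (a m - a b)) / (a b - c)"
  proof -
    have "pf_weight a A j / (a b - a j) / (a j - c)
        = (pf_weight a A j / (a j - c) - pf_weight a A j / (a j - a b)) / (a b - c)" if "j \<in> A" for j
    proof -
      have "a j - c \<noteq> 0" "a j - a b \<noteq> 0" "a b - c \<noteq> 0"
        using that insert.prems ab cb by (auto simp: image_iff)
      then show ?thesis by (simp add: divide_simps) (simp add: algebra_simps)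
    qed
    then show ?thesis
      using insert.hyps by (simp add: pf_weight_insert pf_weight_insert_self sum_divide_distrib)
  qed
  also have "\<dots> = (1 / (\<Prod>m\<in>A. a m - c) - 1 / (\<Prod>m\<in>A. a m - a b)) / (a b - c)
        + (\<Prod>m\<in>A. 1 / (a m - a b)) / (a b - c)"
    using insert.IH[of c] insert.IH[of "a b"] insert.prems inj ab by (simp add: sum_subtractf)
  also have "\<dots> = 1 / (\<Prod>m\<in>insert b A. a m - c)"
    using insert.hyps by (simp add: prod_dividef diff_divide_distrib)
  finally show ?case .
qed

lemma sum_pf_weight_eq_0:
  assumes "finite A" "2 \<le> card A" "inj_on a A"
  shows "(\<Sum>j\<in>A. pf_weight a A j) = 0"
proof -
  obtain b where b: "b \<in> A" using assms(2) by fastforce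
  define B where "B = A - {b}"
  have A: "A = insert b B" "b \<notin> B" "finite B" using b assms(1) by (auto simp: B_def)
  have "card B \<noteq> 0" using assms(1,2) b by (simp add: B_def card_Diff_singleton)
  then have "B \<noteq> {}" by auto
  have ab: "a b \<notin> a ` B" using assms(3) A by auto
  have "(\<Sum>j\<in>A. pf_weight a A j) = (\<Sum>j\<in>B. pf_weight a B j / (a b - a j)) + (\<Prod>m\<in>B. 1 / (a m - a b))"
    using A by (simp add: pf_weight_insert pf_weight_insert_self)
  also have "(\<Sum>j\<in>B. pf_weight a B j / (a b - a j)) = - (\<Sum>j\<in>B. pf_weight a B j / (a j - a b))"
    by (simp add: sum_negf[symmetric] minus_divide_right)
  also have "(\<Sum>j\<in>B. pf_weight a B j / (a j - a b)) = 1 / (\<Prod>m\<in>B. a m - a b)"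
    using partial_fraction_expansion[OF \<open>finite B\<close> \<open>B \<noteq> {}\<close> _ ab] assms(3) A by simp
  finally show ?thesis by (simp add: prod_dividef)
qed

lemma hypoexp_kernel_at_0:
  assumes "finite A" "2 \<le> card A" "inj_on a A"
  shows "hypoexp_kernel a A 0 = 0"
  using sum_pf_weight_eq_0[OF assms] by (simp add: hypoexp_kernel_def)

lemma hypoexp_kernel_insert_deriv:
  assumes "finite A" "b \<notin> A" "inj_on a (insert b A)"
  shows "(hypoexp_kernel a (insert b A) has_real_derivative
           hypoexp_kernel a A t - a b * hypoexp_kernel a (insert b A) t) (at t)"
proof -
  let ?B = "insert b A"
  have "(hypoexp_kernel a ?B has_real_derivative
           (\<Sum>j\<in>?B. exp (- t * a j) * (- a j) * pf_weight a ?B j)) (at t)"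
    unfolding hypoexp_kernel_def [abs_def]
    by (rule DERIV_sum, intro derivative_eq_intros refl) auto
  moreover have "(\<Sum>j\<in>?B. exp (- t * a j) * (- a j) * pf_weight a ?B j)
      = (\<Sum>j\<in>?B. exp (- t * a j) * ((a b - a j) * pf_weight a ?B j)) - a b * hypoexp_kernel a ?B t"
    by (simp add: hypoexp_kernel_def sum_distrib_left sum_subtractf[symmetric] algebra_simps)
  moreover have "(\<Sum>j\<in>?B. exp (- t * a j) * ((a b - a j) * pf_weight a ?B j)) = hypoexp_kernel a A t"
  proof -
    have "(a b - a j) * pf_weight a ?B j = pf_weight a A j" if "j \<in> A" for j
    proof -
      have "a b - a j \<noteq> 0" using that assms by (auto simp: inj_on_def)
      then show ?thesis using that assms by (simp add: pf_weight_insert)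
    qed
    then show ?thesis
      using assms by (simp add: hypoexp_kernel_def)
  qed
  ultimately show ?thesis by simp
qed

lemma hypoexp_kernel_nonneg:
  assumes "finite A" "A \<noteq> {}" "inj_on a A" "0 \<le> x"
  shows "0 \<le> hypoexp_kernel a A x"
  using assms
proof (induction A arbitrary: x rule: finite_ne_induct)
  case (singleton j)
  then show ?case by (simp add: hypoexp_kernel_def pf_weight_def)
next
  case (insert b A)
  let ?G = "\<lambda>t. exp (a b * t) * hypoexp_kernel a (insert b A) t"
  have "?G 0 \<le> ?G x"
  proof (rule DERIV_nonneg_imp_nondecreasing[OF \<open>0 \<le> x\<close>])
    fix t :: real
    assume "0 \<le> t"
    have "(?G has_real_derivative exp (a b * t) * hypoexp_kernel a A t) (at t)"
      using hypoexp_kernel_insert_deriv[OF insert.hyps(1,3) insert.prems(1)]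
      by (auto intro!: derivative_eq_intros simp: algebra_simps)
    moreover have "0 \<le> hypoexp_kernel a A t"
      using insert.IH insert.prems \<open>0 \<le> t\<close> by auto
    ultimately show "\<exists>y. (?G has_real_derivative y) (at t) \<and> 0 \<le> y" by auto
  qed
  moreover have "?G 0 = 0"
    using insert hypoexp_kernel_at_0[of "insert b A" a]
    by (simp add: card_insert_disjoint Suc_le_eq card_gt_0_iff)
  ultimately show ?case by (simp add: zero_le_mult_iff)
qed

lemma hypoexp_survival_singleton: "hypoexp_survival a {j} x = exp (- x * a j)"
  by (simp add: hypoexp_survival_def pf_weight_def)

lemma hypoexp_survival_insert:
  assumes "finite A" "b \<notin> A" "inj_on a (insert b A)"
  shows "hypoexp_survival a (insert b A) x
           = hypoexp_survival a A x + (\<Prod>m\<in>A. a m) * hypoexp_kernel a (insert b A) x"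
proof -
  let ?B = "insert b A"
  have "hypoexp_survival a ?B x - (\<Prod>m\<in>A. a m) * hypoexp_kernel a ?B x
      = (\<Sum>j\<in>?B. exp (- x * a j) * pf_weight a ?B j * ((\<Prod>m\<in>?B - {j}. a m) - (\<Prod>m\<in>A. a m)))"
    by (simp add: hypoexp_survival_def hypoexp_kernel_def sum_distrib_left sum_subtractf[symmetric] algebra_simps)
  also have "\<dots> = (\<Sum>j\<in>A. exp (- x * a j) * pf_weight a ?B j * ((\<Prod>m\<in>?B - {j}. a m) - (\<Prod>m\<in>A. a m)))"
    using assms(1,2) by simp
  also have "\<dots> = hypoexp_survival a A x"
    unfolding hypoexp_survival_def
  proof (rule sum.cong)
    fix j
    assume j: "j \<in> A"
    have "a b - a j \<noteq> 0" using j assms by (auto simp: inj_on_def)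
    moreover have "?B - {j} = insert b (A - {j})" using j assms(2) by auto
    moreover have "(\<Prod>m\<in>A. a m) = a j * (\<Prod>m\<in>A - {j}. a m)"
      using j assms(1) by (simp add: prod.remove)
    ultimately show "exp (- x * a j) * pf_weight a ?B j * ((\<Prod>m\<in>?B - {j}. a m) - (\<Prod>m\<in>A. a m))
        = exp (- x * a j) * (\<Prod>m\<in>A - {j}. a m) * pf_weight a A j"
      using j assms(1,2) by (simp add: pf_weight_insert field_simps)
  qed simp
  finally show ?thesis by simp
qed

lemma hypoexp_survival_at_0:
  assumes "finite A" "A \<noteq> {}" "inj_on a A"
  shows "hypoexp_survival a A 0 = 1"
  using assms
proof (induction A rule: finite_ne_induct)
  case (singleton j)
  then show ?case by (simp add: hypoexp_survival_singleton)
next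
  case (insert b A)
  then show ?case
    using hypoexp_survival_insert[of A b a 0] hypoexp_kernel_at_0[of "insert b A" a]
    by (simp add: card_insert_disjoint Suc_le_eq card_gt_0_iff)
qed

lemma hypoexp_survival_nonneg:
  assumes "finite A" "A \<noteq> {}" "inj_on a A" "\<forall>m\<in>A. 0 \<le> a m" "0 \<le> x"
  shows "0 \<le> hypoexp_survival a A x"
  using assms
proof (induction A rule: finite_ne_induct)
  case (singleton j)
  then show ?case by (simp add: hypoexp_survival_singleton)
next
  case (insert b A)
  have "0 \<le> (\<Prod>m\<in>A. a m) * hypoexp_kernel a (insert b A) x"
    using insert hypoexp_kernel_nonneg[of "insert b A" a x] by (simp add: prod_nonneg)
  then show ?case using insert hypoexp_survival_insert[of A b a x] by simp
qed

lemma hypoexp_survival_deriv: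
  assumes "finite A"
  shows "(hypoexp_survival a A has_real_derivative - (\<Prod>m\<in>A. a m) * hypoexp_kernel a A t) (at t)"
proof -
  have "(hypoexp_survival a A has_real_derivative
          (\<Sum>j\<in>A. exp (- t * a j) * (- a j) * (\<Prod>m\<in>A - {j}. a m) * pf_weight a A j)) (at t)"
    unfolding hypoexp_survival_def [abs_def]
    by (rule DERIV_sum, intro derivative_eq_intros refl) auto
  moreover have "(\<Sum>j\<in>A. exp (- t * a j) * (- a j) * (\<Prod>m\<in>A - {j}. a m) * pf_weight a A j)
      = - (\<Prod>m\<in>A. a m) * hypoexp_kernel a A t"
    unfolding hypoexp_kernel_def sum_distrib_left
  proof (rule sum.cong)
    fix j
    assume "j \<in> A"
    then have "(\<Prod>m\<in>A. a m) = a j * (\<Prod>m\<in>A - {j}. a m)"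
      using assms by (simp add: prod.remove)
    then show "exp (- t * a j) * (- a j) * (\<Prod>m\<in>A - {j}. a m) * pf_weight a A j
        = - (\<Prod>m\<in>A. a m) * (exp (- t * a j) * pf_weight a A j)"
      by simp
  qed simp
  ultimately show ?thesis by simp
qed

lemma hypoexp_survival_le_1:
  assumes "finite A" "A \<noteq> {}" "inj_on a A" "\<forall>m\<in>A. 0 \<le> a m" "0 \<le> x"
  shows "hypoexp_survival a A x \<le> 1"
proof -
  have "hypoexp_survival a A x \<le> hypoexp_survival a A 0"
  proof (rule DERIV_nonpos_imp_nonincreasing[OF \<open>0 \<le> x\<close>])
    fix t :: real
    assume "0 \<le> t"
    then have "0 \<le> (\<Prod>m\<in>A. a m) * hypoexp_kernel a A t"
      using assms hypoexp_kernel_nonneg[of A a t] by (simp add: prod_nonneg)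
    then show "\<exists>y. (hypoexp_survival a A has_real_derivative y) (at t) \<and> y \<le> 0"
      using hypoexp_survival_deriv[OF assms(1), of a t] by (intro exI) auto
  qed
  then show ?thesis using hypoexp_survival_at_0[OF assms(1-3)] by simp
qed

lemma admissible_pos:
  assumes "admissible N \<beta>" "i \<le> N"
  shows "0 < \<beta> i"
proof -
  have "\<beta> (Suc n) \<le> \<beta> n" if "n \<in> {..<N}" for n
    using assms(1) that by (simp add: admissible_def)
  then have "\<beta> N \<le> \<beta> i"
    using assms(2) by (rule lift_Suc_antimono_le_ivl[where N = "{..<N}"]) auto
  then show ?thesis using assms(1) by (simp add: admissible_def)
qed

lemma admissible_mu_pos:
  assumes "admissible N \<beta>" "i < N"
  shows "0 < mu \<beta> i"
  unfolding mu_def using assms admissible_pos[OF assms(1)] by (intro divide_pos_pos sum_pos) auto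

lemma admissible_mu_decreasing:
  assumes "admissible N \<beta>" "Suc i < N"
  shows "mu \<beta> (Suc i) < mu \<beta> i"
proof -
  have pos: "0 < \<beta> (Suc i)" "0 < (\<Sum>j=0..i. \<beta> j)"
    using assms admissible_pos[OF assms(1)] by (auto intro!: sum_pos)
  have "mu \<beta> (Suc i) \<le> \<beta> (Suc i) / (\<Sum>j=0..Suc i. \<beta> j)"
    unfolding mu_def using assms pos by (intro divide_right_mono) (auto simp: admissible_def)
  also have "\<dots> < \<beta> (Suc i) / (\<Sum>j=0..i. \<beta> j)"
    using pos by (intro divide_strict_left_mono) auto
  finally show ?thesis by (simp add: mu_def)
qed

lemma admissible_rates_strict_mono_on:
  assumes "admissible N \<beta>"
  shows "strict_mono_on {..<N} (\<lambda>m. 1 / mu \<beta> m)"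
proof (rule strict_mono_onI)
  have step: "1 / mu \<beta> n < 1 / mu \<beta> (Suc n)" if "n \<in> {i. Suc i < N}" for n
  proof -
    have "0 < mu \<beta> (Suc n)" "mu \<beta> (Suc n) < mu \<beta> n"
      using that admissible_mu_pos[OF assms, of "Suc n"] admissible_mu_decreasing[OF assms, of n]
      by auto
    then show ?thesis by (simp add: frac_less2)
  qed
  fix i j :: nat
  assume "i \<in> {..<N}" "j \<in> {..<N}" "i < j"
  then show "1 / mu \<beta> i < 1 / mu \<beta> j"
    by (intro lift_Suc_mono_less_ivl[of "{i. Suc i < N}" "\<lambda>m. 1 / mu \<beta> m", OF step]) auto
qed

lemma admissible_tail_rates:
  assumes "admissible N \<beta>" "0 < N"
  shows "inj_on (\<lambda>m. 1 / mu \<beta> m) {i..N - 1}" "\<forall>m\<in>{i..N - 1}. 0 \<le> 1 / mu \<beta> m"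
proof -
  have sub: "{i..N - 1} \<subseteq> {..<N}" using assms(2) by auto
  show "inj_on (\<lambda>m. 1 / mu \<beta> m) {i..N - 1}"
    using strict_mono_on_imp_inj_on[OF admissible_rates_strict_mono_on[OF assms(1)]] sub
    by (rule inj_on_subset)
  show "\<forall>m\<in>{i..N - 1}. 0 \<le> 1 / mu \<beta> m"
  proof
    fix m
    assume "m \<in> {i..N - 1}"
    then have "0 < mu \<beta> m" using sub admissible_mu_pos[OF assms(1)] by blast
    then show "0 \<le> 1 / mu \<beta> m" by simp
  qed
qed

text \<open>tail_survival N \<beta> k x is P(T (k-1) > x) in the notation above.\<close>

definition tail_survival :: "nat \<Rightarrow> (nat \<Rightarrow> real) \<Rightarrow> nat \<Rightarrow> real \<Rightarrow> real" where
  "tail_survival N \<beta> k x =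
     (if k = 0 then 1
      else if k \<le> N then hypoexp_survival (\<lambda>m. 1 / mu \<beta> m) {k - 1..N - 1} x
      else 0)"

lemma tail_survival_0 [simp]: "tail_survival N \<beta> 0 x = 1"
  by (simp add: tail_survival_def)

lemma tail_survival_beyond [simp]: "N < k \<Longrightarrow> tail_survival N \<beta> k x = 0"
  by (simp add: tail_survival_def)

lemma tail_survival_bounds:
  assumes "admissible N \<beta>" "0 \<le> x"
  shows "0 \<le> tail_survival N \<beta> k x \<and> tail_survival N \<beta> k x \<le> 1"
proof (cases "1 \<le> k \<and> k \<le> N")
  case True
  then have "0 < N" "{k - 1..N - 1} \<noteq> {}" by auto
  note rates = admissible_tail_rates[OF assms(1) \<open>0 < N\<close>, of "k - 1"]
  show ?thesis
    using hypoexp_survival_nonneg[OF finite_atLeastAtMost \<open>{k - 1..N - 1} \<noteq> {}\<close> rates assms(2)]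
      hypoexp_survival_le_1[OF finite_atLeastAtMost \<open>{k - 1..N - 1} \<noteq> {}\<close> rates assms(2)] True
    by (simp add: tail_survival_def)
next
  case False
  then show ?thesis by (auto simp: tail_survival_def)
qed

lemma p_mid_eq_hypoexp_kernel:
  "p_mid N \<beta> k l
     = (\<Prod>m=k..N-1. 1 / mu \<beta> m) * hypoexp_kernel (\<lambda>m. 1 / mu \<beta> m) {k-1..N-1} (l\<^sup>2 / 2)"
proof -
  \<comment> \<open>also for mu \<beta> j = 0, where both sides are 1 since x / 0 = 0\<close>
  have exponent: "exp (- l\<^sup>2 / (2 * mu \<beta> j)) = exp (- (l\<^sup>2 / 2) * (1 / mu \<beta> j))" for j
    by (cases "mu \<beta> j = 0") simp_all
  show ?thesis
    unfolding p_mid_def hypoexp_kernel_def pf_weight_def exponent ..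
qed

lemma p_mid_nonneg:
  assumes "admissible N \<beta>" "1 \<le> k" "k < N"
  shows "0 \<le> p_mid N \<beta> k l"
proof -
  note rates = admissible_tail_rates[OF assms(1), of "k - 1"]
  have "0 \<le> hypoexp_kernel (\<lambda>m. 1 / mu \<beta> m) {k-1..N-1} (l\<^sup>2 / 2)"
    using assms rates by (intro hypoexp_kernel_nonneg) auto
  moreover have "0 \<le> (\<Prod>m=k..N-1. 1 / mu \<beta> m)"
    using assms rates by (intro prod_nonneg) auto
  ultimately show ?thesis by (simp add: p_mid_eq_hypoexp_kernel)
qed

lemma p_mid_eq_tail_survival_diff:
  assumes "admissible N \<beta>" "1 \<le> k" "k < N"
  shows "p_mid N \<beta> k l = tail_survival N \<beta> k (l\<^sup>2 / 2) - tail_survival N \<beta> (Suc k) (l\<^sup>2 / 2)"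
proof -
  let ?a = "\<lambda>m. 1 / mu \<beta> m" and ?x = "l\<^sup>2 / 2"
  have ins: "{k-1..N-1} = insert (k - 1) {k..N-1}" using assms by auto
  have "hypoexp_survival ?a {k-1..N-1} ?x
      = hypoexp_survival ?a {k..N-1} ?x + (\<Prod>m=k..N-1. ?a m) * hypoexp_kernel ?a {k-1..N-1} ?x"
    using hypoexp_survival_insert[of "{k..N-1}" "k - 1" ?a] admissible_tail_rates(1)[OF assms(1), of "k - 1"]
      assms
    unfolding ins by auto
  then show ?thesis using assms by (simp add: tail_survival_def p_mid_eq_hypoexp_kernel)
qed

lemma p_top_eq_tail_survival:
  assumes "admissible N \<beta>" "0 < N"
  shows "p_top N \<beta> l = tail_survival N \<beta> N (l\<^sup>2 / 2)"
proof -
  have "(\<Sum>i=0..N. \<beta> i) = (\<Sum>i=0..N-1. \<beta> i) + \<beta> N"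
    using assms(2) by (metis Suc_diff_1 sum.atLeast0_atMost_Suc)
  then have "1 / mu \<beta> (N - 1) = (1 - \<beta> N) / \<beta> N"
    using assms by (simp add: mu_def admissible_def)
  moreover have "\<beta> N \<noteq> 0" using assms(1) by (simp add: admissible_def)
  then have "- ((1 - \<beta> N) * l\<^sup>2) / (2 * \<beta> N) = - (l\<^sup>2 / 2) * ((1 - \<beta> N) / \<beta> N)"
    by (simp add: field_simps)
  ultimately show ?thesis
    using assms(2) by (simp add: p_top_def tail_survival_def hypoexp_survival_singleton)
qed

lemma p_eq_tail_survival_diff:
  assumes "admissible N \<beta>" "k \<le> N"
  shows "p N \<beta> k l = tail_survival N \<beta> k (l\<^sup>2 / 2) - tail_survival N \<beta> (Suc k) (l\<^sup>2 / 2)"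
proof -
  let ?G = "\<lambda>k. tail_survival N \<beta> k (l\<^sup>2 / 2)"
  consider "N = 0" | "0 < N" "k = 0" | "0 < N" "k = N" | "1 \<le> k" "k < N"
    using assms(2) by linarith
  then show ?thesis
  proof cases
    case 1
    then show ?thesis using assms(2) by (simp add: p_def tail_survival_def)
  next
    case 2
    have "(\<Sum>i=1..N-1. p_mid N \<beta> i l) = (\<Sum>i=1..N-1. ?G i - ?G (Suc i))"
      using assms(1) by (intro sum.cong) (auto simp: p_mid_eq_tail_survival_diff)
    also have "\<dots> = ?G 1 - ?G N"
      using sum_Suc_diff[of 1 "N - 1" "\<lambda>i. - ?G i"] 2 by simp
    finally show ?thesis
      using 2 p_top_eq_tail_survival[OF assms(1)] by (simp add: p_def tail_survival_def)
  next
    case 3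
    then show ?thesis
      using p_top_eq_tail_survival[OF assms(1)] by (simp add: p_def tail_survival_def)
  next
    case 4
    then show ?thesis
      using p_mid_eq_tail_survival_diff[OF assms(1)] by (simp add: p_def)
  qed
qed

lemma p_nonneg:
  assumes "admissible N \<beta>" "k \<le> N"
  shows "0 \<le> p N \<beta> k l"
proof (cases "1 \<le> k \<and> k < N")
  case True
  then show ?thesis using p_mid_nonneg[OF assms(1)] by (simp add: p_def)
next
  case False
  let ?G = "\<lambda>k. tail_survival N \<beta> k (l\<^sup>2 / 2)"
  from False assms(2) consider "k = 0" | "k = N" by linarith
  then have "?G (Suc k) \<le> ?G k"
  proof cases
    case 1
    then show ?thesis using tail_survival_bounds[OF assms(1), of "l\<^sup>2 / 2" 1] by simp
  next
    case 2
    then show ?thesis using tail_survival_bounds[OF assms(1), of "l\<^sup>2 / 2" N] by simp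
  qed
  then show ?thesis using p_eq_tail_survival_diff[OF assms] by simp
qed

theorem mainTheorem2:
  fixes N :: nat and \<beta> :: "nat \<Rightarrow> real" and l :: real
  assumes "admissible N \<beta>" and "l < 0"
  shows "(\<forall>k\<le>N. 0 \<le> p N \<beta> k l \<and> p N \<beta> k l \<le> 1) \<and> (\<Sum>k=0..N. p N \<beta> k l) = 1"
proof
  let ?G = "\<lambda>k. tail_survival N \<beta> k (l\<^sup>2 / 2)"
  have p: "p N \<beta> k l = ?G k - ?G (Suc k)" if "k \<le> N" for k
    using p_eq_tail_survival_diff[OF assms(1) that] .
  show "\<forall>k\<le>N. 0 \<le> p N \<beta> k l \<and> p N \<beta> k l \<le> 1"
  proof (intro allI impI conjI)
    fix k
    assume "k \<le> N"
    then show "0 \<le> p N \<beta> k l" by (rule p_nonneg[OF assms(1)])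
    have "?G k \<le> 1" "0 \<le> ?G (Suc k)"
      using tail_survival_bounds[OF assms(1), of "l\<^sup>2 / 2"] by simp_all
    then show "p N \<beta> k l \<le> 1" using p[OF \<open>k \<le> N\<close>] by simp
  qed
  have "(\<Sum>k=0..N. p N \<beta> k l) = (\<Sum>k\<le>N. ?G k - ?G (Suc k))"
    using p by (simp add: atLeast0AtMost)
  also have "\<dots> = ?G 0 - ?G (Suc N)"
    by (rule sum_telescope)
  finally show "(\<Sum>k=0..N. p N \<beta> k l) = 1"
    by simp
qed

end
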